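(* Let $\Gamma$ be an extensive-form game. If $\Gamma'\succeq\Gamma$ and $\Gamma'$ is a perfect-recall game, then $\Gamma'\succeq\mathrm{pr}(\Gamma)$. Moreover, $\mathrm{pr}(\Gamma)$ is a perfect-recall game.
   Context: An extensive-form game consists of a finite rooted tree (nodes $\mathcal H$, leaves $\mathcal Z$, actions at nonterminal nodes), a finite player set $\mathcal N$ plus chance, an assignment of nonterminal nodes to players or chance ($\mathcal H_i$ the nodes of $i$), chance distributions, utilities $u_i:\mathcal Z\to\mathbb R_{\ge0}$, and for each $i$ a partition $\mathcal I_i$ of $\mathcal H_i$ into infosets whose nodes share an action set. For a node $h$ with root-to-$h$ path $(h_0,\dots,h_{d-1})$ (excluding $h$), $\mathrm{obs}(h)=(i_k,I_k,a_k)_{k}$ lists the player at $h_k$, the infoset of $h_k$, and the action taken; $\mathrm{obs}_i(h)$ is the subsequence with $i_k=i$. Player $i$ has perfect recall if $\mathrm{obs}_i(h)=\mathrm{obs}_i(h')$ whenever $h,h'$ are in the same infoset of $i$; the game is a perfect-recall game if all players have perfect recall. For games with the same tree and utilities, $\Gamma'\succeq\Gamma$ means for every player $i$, every infoset of $i$ in $\Gamma$ is a disjoint union of infosets of $i$ in $\Gamma'$. $\mathrm{pr}(\Gamma)$ is the game with the same tree and utilities as $\Gamma$ in which, for every player $i$, each $I\in\mathcal I_i$ is partitioned into the classes of $h\sim h'\iff\mathrm{obs}_i(h)=\mathrm{obs}_i(h')$ (computed in $\Gamma$). *)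

theory Defs
  imports Complex_Main
begin

text \<open>The finite rooted tree is represented by its set of
nodes, each node being the list of actions on the path from the root (the root
is the empty list). The player assignment maps a nonterm_nodes node to
Some i (player i) or None (chance).\<close>

record ('p, 'a) game =
  nodes    :: "'a list set"
  players  :: "'p set"
  player   :: "'a list \<Rightarrow> 'p option"
  chance   :: "'a list \<Rightarrow> 'a \<Rightarrow> real"
  util     :: "'p \<Rightarrow> 'a list \<Rightarrow> real"
  infosets :: "'p \<Rightarrow> 'a list set set"

definition acts :: "('p, 'a) game \<Rightarrow> 'a list \<Rightarrow> 'a set" where
  "acts G h = {a. h @ [a] \<in> nodes G}"

definition leaves :: "('p, 'a) game \<Rightarrow> 'a list set" where
  "leaves G = {h \<in> nodes G. acts G h = {}}"

definition nonterm_nodes :: "('p, 'a) game \<Rightarrow> 'a list set" where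
  "nonterm_nodes G = nodes G - leaves G"

definition player_nodes :: "('p, 'a) game \<Rightarrow> 'p \<Rightarrow> 'a list set" where
  "player_nodes G i = {h \<in> nonterm_nodes G. player G h = Some i}"

definition chance_nodes :: "('p, 'a) game \<Rightarrow> 'a list set" where
  "chance_nodes G = {h \<in> nonterm_nodes G. player G h = None}"

definition is_game :: "('p, 'a) game \<Rightarrow> bool" where
  "is_game G \<longleftrightarrow>
     finite (nodes G) \<and> [] \<in> nodes G \<and>
     (\<forall>h a. h @ [a] \<in> nodes G \<longrightarrow> h \<in> nodes G) \<and>
     finite (players G) \<and>
     (\<forall>h \<in> nonterm_nodes G. player G h = None \<or> (\<exists>i \<in> players G. player G h = Some i)) \<and>
     (\<forall>h \<in> chance_nodes G.
        (\<forall>a \<in> acts G h. chance G h a \<ge> 0) \<and> (\<Sum>a \<in> acts G h. chance G h a) = 1) \<and>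
     (\<forall>i \<in> players G. \<forall>z \<in> leaves G. util G i z \<ge> 0) \<and>
     (\<forall>i \<in> players G.
        (\<forall>I \<in> infosets G i. I \<noteq> {}) \<and>
        \<Union>(infosets G i) = player_nodes G i \<and>
        (\<forall>I \<in> infosets G i. \<forall>J \<in> infosets G i. I \<noteq> J \<longrightarrow> I \<inter> J = {}) \<and>
        (\<forall>I \<in> infosets G i. \<forall>h \<in> I. \<forall>h' \<in> I. acts G h = acts G h'))"

definition infoset_of :: "('p, 'a) game \<Rightarrow> 'a list \<Rightarrow> 'a list set" where
  "infoset_of G h = (THE I. \<exists>i. player G h = Some i \<and> I \<in> infosets G i \<and> h \<in> I)"

text \<open>obs(h): for each strict ancestor h_k = take k h, the player at h_k,
its infoset and the action taken there.\<close>
definition obs :: "('p, 'a) game \<Rightarrow> 'a list \<Rightarrow> ('p option \<times> 'a list set \<times> 'a) list" where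
  "obs G h = map (\<lambda>k. (player G (take k h), infoset_of G (take k h), h ! k)) [0..<length h]"

definition obs_i :: "('p, 'a) game \<Rightarrow> 'p \<Rightarrow> 'a list \<Rightarrow> ('p option \<times> 'a list set \<times> 'a) list" where
  "obs_i G i h = filter (\<lambda>(j, _, _). j = Some i) (obs G h)"

definition perfect_recall :: "('p, 'a) game \<Rightarrow> bool" where
  "perfect_recall G \<longleftrightarrow>
     (\<forall>i \<in> players G. \<forall>I \<in> infosets G i. \<forall>h \<in> I. \<forall>h' \<in> I. obs_i G i h = obs_i G i h')"

definition same_base :: "('p, 'a) game \<Rightarrow> ('p, 'a) game \<Rightarrow> bool" where
  "same_base G' G \<longleftrightarrow>
     nodes G' = nodes G \<and> players G' = players G \<and>
     (\<forall>h \<in> nodes G. player G' h = player G h) \<and>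
     (\<forall>h \<in> chance_nodes G. \<forall>a \<in> acts G h. chance G' h a = chance G h a) \<and>
     (\<forall>i \<in> players G. \<forall>z \<in> leaves G. util G' i z = util G i z)"

definition refines :: "('p, 'a) game \<Rightarrow> ('p, 'a) game \<Rightarrow> bool" where
  "refines G' G \<longleftrightarrow> same_base G' G \<and>
     (\<forall>i \<in> players G. \<forall>I \<in> infosets G i. \<exists>S \<subseteq> infosets G' i.
        (\<forall>A \<in> S. \<forall>B \<in> S. A \<noteq> B \<longrightarrow> A \<inter> B = {}) \<and> I = \<Union>S)"

definition pr :: "('p, 'a) game \<Rightarrow> ('p, 'a) game" where
  "pr G = G\<lparr> infosets := (\<lambda>i. \<Union>I \<in> infosets G i.
              {{h' \<in> I. obs_i G i h' = obs_i G i h} | h. h \<in> I}) \<rparr>"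

end

theory Submission
  imports Defs
begin

text \<open>Both claims rest on one observation about the recursion
obs_i(h a) = obs_i(h) @ [(i, infoset(h), a)] (the last entry only at nodes of i):
if the infoset of a node of i in a game Y is determined by its infoset and its
history obs_i in a game X on the same tree, then equality of obs_i in X implies
equality of obs_i in Y, by induction on the two histories. In pr(G) the infoset
of h is determined by the infoset of h in G and obs_i(h); in a refinement G' of G
the infoset of h in G' determines that in G. Hence pr(G) has perfect recall,
and in a perfect-recall refinement G' every infoset of G' inside an infoset I of G
lies in a single obs_i-class of I, so each class is a union of infosets of G'.\<close>

lemma is_game_prefix: "is_game G \<Longrightarrow> h @ [a] \<in> nodes G \<Longrightarrow> h \<in> nodes G"
  unfolding is_game_def by (elim conjE) blast

lemma is_game_player:
  assumes "is_game G" "h \<in> nonterm_nodes G" "player G h = Some i"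
  shows "i \<in> players G"
proof -
  have "\<forall>h \<in> nonterm_nodes G. player G h = None \<or> (\<exists>j \<in> players G. player G h = Some j)"
    using assms(1) unfolding is_game_def by (elim conjE)
  then show ?thesis
    using assms(2,3) by force
qed

lemma snoc_nonterm_nodes:
  assumes "is_game G" "h @ [a] \<in> nodes G"
  shows "h \<in> nonterm_nodes G"
  using is_game_prefix[OF assms] assms(2)
  unfolding nonterm_nodes_def leaves_def acts_def by auto

lemma is_game_infosets:
  assumes "is_game G" "i \<in> players G"
  shows "\<Union>(infosets G i) = player_nodes G i"
    and "I \<in> infosets G i \<Longrightarrow> J \<in> infosets G i \<Longrightarrow> h \<in> I \<Longrightarrow> h \<in> J \<Longrightarrow> I = J"
proof -
  have "\<forall>i \<in> players G. (\<forall>I \<in> infosets G i. I \<noteq> {}) \<and> \<Union>(infosets G i) = player_nodes G i \<and>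
     (\<forall>I \<in> infosets G i. \<forall>J \<in> infosets G i. I \<noteq> J \<longrightarrow> I \<inter> J = {}) \<and>
     (\<forall>I \<in> infosets G i. \<forall>h \<in> I. \<forall>h' \<in> I. acts G h = acts G h')"
    using assms(1) unfolding is_game_def by (elim conjE)
  then have cover: "\<Union>(infosets G i) = player_nodes G i"
    and disj: "\<forall>I \<in> infosets G i. \<forall>J \<in> infosets G i. I \<noteq> J \<longrightarrow> I \<inter> J = {}"
    using assms(2) by simp_all
  show "\<Union>(infosets G i) = player_nodes G i" by (fact cover)
  show "I \<in> infosets G i \<Longrightarrow> J \<in> infosets G i \<Longrightarrow> h \<in> I \<Longrightarrow> h \<in> J \<Longrightarrow> I = J"
    using disj by blast
qed

lemma infosets_subset_nodes:
  assumes "is_game G" "i \<in> players G" "I \<in> infosets G i"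
  shows "I \<subseteq> nodes G"
  using is_game_infosets(1)[OF assms(1,2)] assms(3)
  unfolding player_nodes_def nonterm_nodes_def by blast

lemma infoset_of_eqI:
  assumes "player G h = Some i" "I \<in> infosets G i" "h \<in> I"
    and "\<And>J. J \<in> infosets G i \<Longrightarrow> h \<in> J \<Longrightarrow> J = I"
  shows "infoset_of G h = I"
  unfolding infoset_of_def
proof (rule the_equality)
  show "\<exists>j. player G h = Some j \<and> I \<in> infosets G j \<and> h \<in> I"
    using assms(1-3) by blast
next
  fix J
  assume "\<exists>j. player G h = Some j \<and> J \<in> infosets G j \<and> h \<in> J"
  then show "J = I"
    using assms(1,4) by auto
qed

lemma infoset_of_eq:
  assumes "is_game G" "i \<in> players G" "I \<in> infosets G i" "h \<in> I"
  shows "infoset_of G h = I"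
proof (rule infoset_of_eqI)
  show "player G h = Some i"
    using is_game_infosets(1)[OF assms(1,2)] assms(3,4) unfolding player_nodes_def by blast
qed (use assms is_game_infosets(2)[OF assms(1,2)] in auto)

lemma infoset_of_mem:
  assumes "is_game G" "h \<in> nonterm_nodes G" "player G h = Some i"
  shows "i \<in> players G" "infoset_of G h \<in> infosets G i" "h \<in> infoset_of G h"
proof -
  show i: "i \<in> players G"
    using is_game_player[OF assms] .
  have "h \<in> \<Union>(infosets G i)"
    using is_game_infosets(1)[OF assms(1) i] assms(2,3) unfolding player_nodes_def by blast
  then obtain I where "I \<in> infosets G i" "h \<in> I" by blast
  then show "infoset_of G h \<in> infosets G i" "h \<in> infoset_of G h"
    using infoset_of_eq[OF assms(1) i] by simp_all
qed

lemma obs_snoc: "obs G (h @ [a]) = obs G h @ [(player G h, infoset_of G h, a)]"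
  unfolding obs_def by (auto simp: nth_append intro!: map_cong)

lemma obs_i_Nil [simp]: "obs_i G i [] = []"
  unfolding obs_i_def obs_def by simp

lemma obs_i_snoc:
  "obs_i G i (h @ [a]) =
     obs_i G i h @ (if player G h = Some i then [(Some i, infoset_of G h, a)] else [])"
  unfolding obs_i_def obs_snoc by auto

lemma obs_i_eq_transfer:
  assumes X: "is_game X"
    and player_eq: "\<And>h. h \<in> nonterm_nodes X \<Longrightarrow> player Y h = player X h"
    and infoset_det: "\<And>h h'. h \<in> nonterm_nodes X \<Longrightarrow> h' \<in> nonterm_nodes X \<Longrightarrow>
      player X h = Some i \<Longrightarrow> player X h' = Some i \<Longrightarrow>
      infoset_of X h = infoset_of X h' \<Longrightarrow> obs_i X i h = obs_i X i h' \<Longrightarrow>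
      infoset_of Y h = infoset_of Y h'"
  shows "x \<in> nodes X \<Longrightarrow> y \<in> nodes X \<Longrightarrow> obs_i X i x = obs_i X i y \<Longrightarrow>
    obs_i Y i x = obs_i Y i y"
proof (induction "length x + length y" arbitrary: x y rule: less_induct)
  case less
  have snoc_Y: "obs_i Y i (h @ [a]) = obs_i Y i h @
      (if player X h = Some i then [(Some i, infoset_of Y h, a)] else [])"
    if "h @ [a] \<in> nodes X" for h a
    using obs_i_snoc[of Y i h a] player_eq[OF snoc_nonterm_nodes[OF X that]] by simp
  consider
      (x_other) h a where "x = h @ [a]" "player X h \<noteq> Some i"
    | (y_other) h a where "y = h @ [a]" "player X h \<noteq> Some i"
    | (both_own) "\<forall>h a. x = h @ [a] \<longrightarrow> player X h = Some i"
                 "\<forall>h a. y = h @ [a] \<longrightarrow> player X h = Some i"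
    by blast
  then show ?case
  proof cases
    case (x_other h a)
    then have "obs_i Y i h = obs_i Y i y"
      using less is_game_prefix[OF X] by (simp add: obs_i_snoc)
    then show ?thesis
      using x_other snoc_Y less.prems(1) by simp
  next
    case (y_other h a)
    then have "obs_i Y i x = obs_i Y i h"
      using less is_game_prefix[OF X] by (simp add: obs_i_snoc)
    then show ?thesis
      using y_other snoc_Y less.prems(2) by simp
  next
    case both_own
    show ?thesis
    proof (cases x rule: rev_cases)
      case Nil
      then show ?thesis
        using both_own less.prems by (cases y rule: rev_cases) (auto simp: obs_i_snoc)
    next
      case (snoc h a)
      then obtain h' a' where y: "y = h' @ [a']"
        using both_own less.prems by (cases y rule: rev_cases) (auto simp: obs_i_snoc)
      have own: "player X h = Some i" "player X h' = Some i"
        using both_own snoc y by simp_all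
      then have obs_eq: "obs_i X i h = obs_i X i h'"
        and infoset_eq: "infoset_of X h = infoset_of X h'" and "a = a'"
        using less.prems(3) snoc y by (simp_all add: obs_i_snoc)
      have "obs_i Y i h = obs_i Y i h'"
        using less.hyps[of h h'] obs_eq less.prems(1,2) snoc y is_game_prefix[OF X] by simp
      moreover have "infoset_of Y h = infoset_of Y h'"
        using infoset_det own infoset_eq obs_eq less.prems(1,2) snoc y
          snoc_nonterm_nodes[OF X] by blast
      ultimately show ?thesis
        using snoc y own \<open>a = a'\<close> snoc_Y less.prems(1,2) by simp
    qed
  qed
qed

lemma pr_simps [simp]:
  "nodes (pr G) = nodes G" "players (pr G) = players G" "player (pr G) = player G"
  "infosets (pr G) i = (\<Union>I \<in> infosets G i. {{h' \<in> I. obs_i G i h' = obs_i G i h} | h. h \<in> I})"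
  unfolding pr_def by simp_all

lemma same_base_pr: "same_base G' (pr G) \<longleftrightarrow> same_base G' G"
  unfolding same_base_def chance_nodes_def nonterm_nodes_def leaves_def acts_def pr_def by simp

lemma infosets_prE:
  assumes "J \<in> infosets (pr G) i"
  obtains I h where "I \<in> infosets G i" "h \<in> I" "J = {h' \<in> I. obs_i G i h' = obs_i G i h}"
  using assms by auto

lemma infoset_of_pr:
  assumes G: "is_game G" and h: "h \<in> nonterm_nodes G" "player G h = Some i"
  shows "infoset_of (pr G) h = {h' \<in> infoset_of G h. obs_i G i h' = obs_i G i h}"
    (is "_ = ?C")
proof (rule infoset_of_eqI)
  note I = infoset_of_mem[OF G h]
  show "player (pr G) h = Some i"
    using h(2) by simp
  show "?C \<in> infosets (pr G) i"
    using I(2,3) unfolding pr_simps by blast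
  show "h \<in> ?C"
    using I(3) by simp
  fix J
  assume "J \<in> infosets (pr G) i" "h \<in> J"
  then obtain I0 h0 where I0: "I0 \<in> infosets G i"
    and J: "J = {h' \<in> I0. obs_i G i h' = obs_i G i h0}"
    by (elim infosets_prE)
  have "h \<in> I0" and obs_h: "obs_i G i h = obs_i G i h0"
    using \<open>h \<in> J\<close> J by simp_all
  then have "I0 = infoset_of G h"
    using infoset_of_eq[OF G I(1) I0] by simp
  then show "J = ?C"
    unfolding J using obs_h by simp
qed

lemma obs_i_eq_pr:
  assumes "is_game G" "x \<in> nodes G" "y \<in> nodes G" "obs_i G i x = obs_i G i y"
  shows "obs_i (pr G) i x = obs_i (pr G) i y"
proof (rule obs_i_eq_transfer[OF assms(1)])
  fix h h'
  assume "h \<in> nonterm_nodes G" "h' \<in> nonterm_nodes G"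
    "player G h = Some i" "player G h' = Some i"
    "infoset_of G h = infoset_of G h'" "obs_i G i h = obs_i G i h'"
  then show "infoset_of (pr G) h = infoset_of (pr G) h'"
    by (simp add: infoset_of_pr[OF assms(1)])
qed (use assms in simp_all)

lemma perfect_recall_pr:
  assumes "is_game G"
  shows "perfect_recall (pr G)"
  unfolding perfect_recall_def
proof (intro ballI)
  fix i J h h'
  assume i: "i \<in> players (pr G)" and "J \<in> infosets (pr G) i" "h \<in> J" "h' \<in> J"
  then obtain I h0 where I: "I \<in> infosets G i" "h0 \<in> I"
    and "J = {h' \<in> I. obs_i G i h' = obs_i G i h0}"
    by (auto elim: infosets_prE)
  then have "h \<in> I" "h' \<in> I" "obs_i G i h = obs_i G i h'"
    using \<open>h \<in> J\<close> \<open>h' \<in> J\<close> by simp_all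
  then show "obs_i (pr G) i h = obs_i (pr G) i h'"
    using obs_i_eq_pr[OF assms] infosets_subset_nodes[OF assms _ I(1)] i by auto
qed

lemma refinesD:
  assumes "refines G' G" "i \<in> players G" "I \<in> infosets G i"
  obtains S where "S \<subseteq> infosets G' i" "\<forall>A \<in> S. \<forall>B \<in> S. A \<noteq> B \<longrightarrow> A \<inter> B = {}" "I = \<Union>S"
proof -
  have "\<forall>i \<in> players G. \<forall>I \<in> infosets G i. \<exists>S \<subseteq> infosets G' i.
      (\<forall>A \<in> S. \<forall>B \<in> S. A \<noteq> B \<longrightarrow> A \<inter> B = {}) \<and> I = \<Union>S"
    using assms(1) unfolding refines_def by (rule conjunct2)
  then have "\<exists>S \<subseteq> infosets G' i. (\<forall>A \<in> S. \<forall>B \<in> S. A \<noteq> B \<longrightarrow> A \<inter> B = {}) \<and> I = \<Union>S"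
    using assms(2,3) by simp
  then show ?thesis
    by (elim exE conjE) (rule that; assumption)
qed

lemma refines_same_tree:
  assumes "refines G' G"
  shows "nodes G' = nodes G" "players G' = players G"
    "nonterm_nodes G' = nonterm_nodes G" "\<And>h. h \<in> nodes G \<Longrightarrow> player G' h = player G h"
proof -
  have "same_base G' G"
    using assms unfolding refines_def by (rule conjunct1)
  then show nodes: "nodes G' = nodes G" and "players G' = players G"
    and "\<And>h. h \<in> nodes G \<Longrightarrow> player G' h = player G h"
    unfolding same_base_def by simp_all
  show "nonterm_nodes G' = nonterm_nodes G"
    unfolding nonterm_nodes_def leaves_def acts_def nodes ..
qed

lemma infoset_of_refines_subset:
  assumes G: "is_game G" and G': "is_game G'" and r: "refines G' G"
    and h: "h \<in> nonterm_nodes G" "player G h = Some i"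
  shows "infoset_of G' h \<subseteq> infoset_of G h"
proof -
  note I = infoset_of_mem[OF G h]
  have h': "h \<in> nonterm_nodes G'" "player G' h = Some i"
    using h refines_same_tree[OF r] unfolding nonterm_nodes_def by auto
  note I' = infoset_of_mem[OF G' h']
  obtain S where S: "S \<subseteq> infosets G' i" "infoset_of G h = \<Union>S"
    using refinesD[OF r I(1,2)] by metis
  then obtain A where "A \<in> S" "h \<in> A"
    using I(3) by blast
  moreover have "A = infoset_of G' h"
    using is_game_infosets(2)[OF G' I'(1)] I' S(1) \<open>A \<in> S\<close> \<open>h \<in> A\<close> by blast
  ultimately show ?thesis
    using S(2) by blast
qed

lemma obs_i_eq_refines:
  assumes G: "is_game G" and G': "is_game G'" and r: "refines G' G"
    and "x \<in> nodes G" "y \<in> nodes G" "obs_i G' i x = obs_i G' i y"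
  shows "obs_i G i x = obs_i G i y"
proof (rule obs_i_eq_transfer[of G' G i x y])
  fix h h'
  assume h: "h \<in> nonterm_nodes G'" "h' \<in> nonterm_nodes G'"
    and own: "player G' h = Some i" "player G' h' = Some i"
    and "infoset_of G' h = infoset_of G' h'"
  have h_G: "h \<in> nonterm_nodes G" "h' \<in> nonterm_nodes G"
    "player G h = Some i" "player G h' = Some i"
    using h own refines_same_tree[OF r] unfolding nonterm_nodes_def by auto
  then have "h' \<in> infoset_of G h"
    using infoset_of_refines_subset[OF G G' r] infoset_of_mem(3)[OF G' h(2) own(2)]
      \<open>infoset_of G' h = infoset_of G' h'\<close> by blast
  then show "infoset_of G h = infoset_of G h'"
    using infoset_of_eq[OF G] infoset_of_mem[OF G h_G(1,3)] by metis
qed (use assms refines_same_tree[OF r] in \<open>auto simp: nonterm_nodes_def\<close>)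

lemma refines_pr:
  assumes G: "is_game G" and G': "is_game G'" and r: "refines G' G"
    and recall: "perfect_recall G'"
  shows "refines G' (pr G)"
  unfolding refines_def
proof (intro conjI ballI)
  show "same_base G' (pr G)"
    using r unfolding same_base_pr refines_def by (rule conjunct1)
next
  fix i J
  assume i: "i \<in> players (pr G)" and "J \<in> infosets (pr G) i"
  then obtain I h0 where I: "I \<in> infosets G i" "h0 \<in> I"
    and J: "J = {h' \<in> I. obs_i G i h' = obs_i G i h0}"
    by (auto elim: infosets_prE)
  obtain S where S: "S \<subseteq> infosets G' i" "\<forall>A \<in> S. \<forall>B \<in> S. A \<noteq> B \<longrightarrow> A \<inter> B = {}"
    "I = \<Union>S"
    using refinesD[OF r _ I(1)] i by auto
  have "A \<subseteq> J" if "A \<in> S" "y \<in> A" "y \<in> J" for A y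
  proof
    fix z
    assume "z \<in> A"
    have "obs_i G' i z = obs_i G' i y"
      using recall \<open>z \<in> A\<close> \<open>y \<in> A\<close> S(1) \<open>A \<in> S\<close> i refines_same_tree(2)[OF r]
      unfolding perfect_recall_def by auto
    moreover have "z \<in> I" "y \<in> I"
      using S(3) \<open>A \<in> S\<close> \<open>z \<in> A\<close> \<open>y \<in> A\<close> by blast+
    ultimately have "obs_i G i z = obs_i G i y"
      using obs_i_eq_refines[OF G G' r] infosets_subset_nodes[OF G _ I(1)] i by auto
    then show "z \<in> J"
      using J \<open>z \<in> I\<close> \<open>y \<in> J\<close> by simp
  qed
  then have "J = \<Union>{A \<in> S. A \<subseteq> J}"
    using J S(3) by blast
  then show "\<exists>S' \<subseteq> infosets G' i. (\<forall>A \<in> S'. \<forall>B \<in> S'. A \<noteq> B \<longrightarrow> A \<inter> B = {}) \<and> J = \<Union>S'"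
    using S(1,2) by (intro exI[of _ "{A \<in> S. A \<subseteq> J}"]) auto
qed

theorem corollary1:
  fixes G G' :: "('p, 'a) game"
  assumes "is_game G" and "is_game G'"
    and "refines G' G" and "perfect_recall G'"
  shows "refines G' (pr G) \<and> perfect_recall (pr G)"
  using refines_pr[OF assms] perfect_recall_pr[OF assms(1)] by simp

end
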